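(* For integers $n\ge 0$ and $i\ge 0$, \[ S_n(i+2)=S_n(i)-q^{i}S_{n+1}(i)+q^{i(n+1)}(1+q^i)(q;q^2)_{n+1}, \] where $S_m(i):=\sum_{j=0}^{m} \frac{q^{ij}(q;q)_{m+j}}{(q^2;q^2)_j}$.
   Context: $(a;q)_0:=1$ and $(a;q)_n:=(1-a)(1-aq)\cdots(1-aq^{n-1})$ for $n\ge1$. *)

theory Defs
  imports Complex_Main
begin

definition qpoch :: "'a::comm_ring_1 \<Rightarrow> 'a \<Rightarrow> nat \<Rightarrow> 'a" where
  "qpoch a q n = (\<Prod>k<n. 1 - a * q ^ k)"

definition S :: "'a::field \<Rightarrow> nat \<Rightarrow> nat \<Rightarrow> 'a" where
  "S q m i = (\<Sum>j=0..m. q ^ (i * j) * qpoch q q (m + j) / qpoch (q^2) (q^2) j)"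

end

(* Writing D_j = (q^2;q^2)_j, the difference S_n(i) - S_n(i+2) has terms
   q^(ij) (1 - q^(2j)) (q;q)_(n+j) / D_j; the factor 1 - q^(2j) cancels the last factor of D_j,
   and after the shift j = k + 1 what is left are the first n terms of q^i S_(n+1)(i). The two remaining
   terms of q^i S_(n+1)(i) collapse to (q;q^2)_(n+1), since splitting the factors of (q;q)_k by
   the parity of their index gives (q;q)_(2n+1) = (q;q^2)_(n+1) D_n and (q;q)_(2n+2) = (q;q^2)_(n+1) D_(n+1). *)
theory Submission
  imports Defs
begin

lemma qpoch_Suc: "qpoch a q (Suc n) = qpoch a q n * (1 - a * q ^ n)"
  unfolding qpoch_def by (simp add: mult.commute)

lemma qpoch_self_Suc: "qpoch q q (Suc n) = qpoch q q n * (1 - q ^ Suc n)"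
  by (simp add: qpoch_Suc)

lemma qpoch_eq_0_iff:
  fixes a q :: "'a::idom"
  shows "qpoch a q n = 0 \<longleftrightarrow> (\<exists>k<n. a * q ^ k = 1)"
  unfolding qpoch_def by (auto simp: prod_zero_iff)

lemma qpoch_nonzero_mono:
  fixes a q :: "'a::idom"
  assumes "qpoch a q n \<noteq> 0" "m \<le> n"
  shows "qpoch a q m \<noteq> 0"
  using assms by (auto simp: qpoch_eq_0_iff)

lemma qpoch_double:
  "qpoch a q (2 * m) = qpoch a (q^2) m * qpoch (a * q) (q^2) m"
proof (induction m)
  case 0
  then show ?case by (simp add: qpoch_def)
next
  case (Suc m)
  have "qpoch a q (2 * Suc m) = qpoch a q (2 * m) * (1 - a * (q^2) ^ m) * (1 - a * q * (q^2) ^ m)"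
    using qpoch_Suc[of a q "2 * m"] qpoch_Suc[of a q "Suc (2 * m)"]
    by (simp add: power_mult mult.assoc)
  also have "\<dots> = qpoch a (q^2) (Suc m) * qpoch (a * q) (q^2) (Suc m)"
    unfolding Suc.IH by (simp add: qpoch_Suc mult_ac)
  finally show ?case .
qed

lemma qpoch_double_Suc:
  "qpoch a q (2 * m + 1) = qpoch a (q^2) (m + 1) * qpoch (a * q) (q^2) m"
proof -
  have "qpoch a q (2 * m + 1) = qpoch a q (2 * m) * (1 - a * (q^2) ^ m)"
    by (simp add: qpoch_Suc power_mult)
  then show ?thesis
    unfolding qpoch_double by (simp add: qpoch_Suc mult_ac)
qed

lemma S_diff_add_2:
  fixes q :: "'a::field"
  assumes "qpoch (q^2) (q^2) n \<noteq> 0"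
  shows "S q n i - S q n (i + 2)
           = (\<Sum>k<n. q ^ (i * (k + 1)) * qpoch q q (n + 1 + k) / qpoch (q^2) (q^2) k)"
proof -
  let ?P = "qpoch q q" and ?D = "qpoch (q^2) (q^2)"
  have "S q n i - S q n (i + 2) = (\<Sum>j\<le>n. q ^ (i * j) * (1 - (q^2) ^ j) * ?P (n + j) / ?D j)"
    unfolding S_def atLeast0AtMost sum_subtractf[symmetric]
  proof (intro sum.cong refl)
    fix j
    have "q ^ ((i + 2) * j) = q ^ (i * j) * (q^2) ^ j"
      by (metis add_mult_distrib power_add power_mult)
    then show "q ^ (i * j) * ?P (n + j) / ?D j - q ^ ((i + 2) * j) * ?P (n + j) / ?D j
               = q ^ (i * j) * (1 - (q^2) ^ j) * ?P (n + j) / ?D j"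
      by (simp add: algebra_simps diff_divide_distrib)
  qed
  also have "\<dots> = (\<Sum>k<n. q ^ (i * Suc k) * (1 - (q^2) ^ Suc k) * ?P (n + Suc k) / ?D (Suc k))"
    by (simp add: sum.atMost_shift)
  also have "\<dots> = (\<Sum>k<n. q ^ (i * (k + 1)) * ?P (n + 1 + k) / ?D k)"
  proof (intro sum.cong refl)
    fix k assume "k \<in> {..<n}"
    then have "?D (Suc k) \<noteq> 0"
      using qpoch_nonzero_mono[OF assms] by simp
    then have "?D k \<noteq> 0" "1 - (q^2) ^ Suc k \<noteq> 0"
      by (simp_all add: qpoch_self_Suc)
    then show "q ^ (i * Suc k) * (1 - (q^2) ^ Suc k) * ?P (n + Suc k) / ?D (Suc k)
               = q ^ (i * (k + 1)) * ?P (n + 1 + k) / ?D k"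
      by (simp add: qpoch_self_Suc)
  qed
  finally show ?thesis .
qed

lemma power_mult_S_Suc:
  fixes q :: "'a::field"
  assumes "qpoch (q^2) (q^2) (n + 1) \<noteq> 0"
  shows "q ^ i * S q (n + 1) i
           = (\<Sum>k<n. q ^ (i * (k + 1)) * qpoch q q (n + 1 + k) / qpoch (q^2) (q^2) k)
             + q ^ (i * (n + 1)) * (1 + q ^ i) * qpoch q (q^2) (n + 1)"
proof -
  let ?P = "qpoch q q" and ?D = "qpoch (q^2) (q^2)"
  have "?D n \<noteq> 0"
    using qpoch_nonzero_mono[OF assms] by simp
  moreover have "?P (2 * n + 1) = qpoch q (q^2) (n + 1) * ?D n"
                "?P (2 * (n + 1)) = qpoch q (q^2) (n + 1) * ?D (n + 1)"
    using qpoch_double_Suc[of q q n] qpoch_double[of q q "n + 1"]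
    by (simp_all add: power2_eq_square)
  ultimately have last_two: "?P (2 * n + 1) / ?D n = qpoch q (q^2) (n + 1)"
                            "?P (2 * (n + 1)) / ?D (n + 1) = qpoch q (q^2) (n + 1)"
    using assms by simp_all
  have "q ^ i * S q (n + 1) i = (\<Sum>k\<le>n + 1. q ^ (i * (k + 1)) * ?P (n + 1 + k) / ?D k)"
    unfolding S_def atLeast0AtMost sum_distrib_left
    by (simp add: power_add algebra_simps)
  also have "\<dots> = (\<Sum>k<n. q ^ (i * (k + 1)) * ?P (n + 1 + k) / ?D k)
                  + q ^ (i * (n + 1)) * (?P (2 * n + 1) / ?D n)
                  + q ^ (i * (n + 1)) * q ^ i * (?P (2 * (n + 1)) / ?D (n + 1))"
    by (simp add: lessThan_Suc_atMost[symmetric] power_add algebra_simps mult_2 mult_2_right)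
  finally show ?thesis
    unfolding last_two by (simp add: algebra_simps)
qed

theorem lemma3p2:
  fixes q :: complex and n i :: nat
  assumes "\<forall>k\<in>{1..n+1}. q ^ (2 * k) \<noteq> 1"
  shows "S q n (i + 2) = S q n i - q ^ i * S q (n + 1) i
           + q ^ (i * (n + 1)) * (1 + q ^ i) * qpoch q (q^2) (n + 1)"
proof -
  have "qpoch (q^2) (q^2) (n + 1) \<noteq> 0"
  proof
    assume "qpoch (q^2) (q^2) (n + 1) = 0"
    then obtain k where "k < n + 1" "q ^ (2 * Suc k) = 1"
      by (auto simp: qpoch_eq_0_iff power_mult[symmetric] power_add[symmetric] mult.commute)
    with assms show False by force
  qed
  moreover from this have "qpoch (q^2) (q^2) n \<noteq> 0"
    by (rule qpoch_nonzero_mono) simp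
  ultimately show ?thesis
    using S_diff_add_2[of q n i] power_mult_S_Suc[of q n i] by (simp add: algebra_simps)
qed

end
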